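(* Fix $\pi_1,\pi_1'\in(0,1)$ and set $\pi_2=1-\pi_1$, $\pi_2'=1-\pi_1'$. For real numbers $\mu_1<\mu_2$ and $\sigma>0$, define the densities on $\mathbb{R}$ $$p(x)=\pi_1\mathcal{N}(x;\mu_1,\sigma^2)+\pi_2\mathcal{N}(x;\mu_2,\sigma^2),\qquad p'(x)=\pi_1'\mathcal{N}(x;\mu_1,\sigma^2)+\pi_2'\mathcal{N}(x;\mu_2,\sigma^2),$$ which differ only in their mixing proportions. Fix $\delta\neq 0$ and put $x=\frac{\mu_1+\mu_2}{2}+\delta$. Then the dependence of the score $\nabla_x\log p(x)$ on the mixing proportion vanishes as $\frac{\mu_1-\mu_2}{\sigma^2}\to-\infty$: for every $\varepsilon>0$ there is $K>0$ such that for all $\mu_1<\mu_2$ and $\sigma>0$ with $\frac{\mu_1-\mu_2}{\sigma^2}<-K$, $$\Bigl|\nabla_x\log p(x)-\nabla_x\log p'(x)\Bigr|<\varepsilon .$$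
   Context: $\mathcal{N}(x;\mu,\sigma^2)$ denotes the Gaussian density with mean $\mu$ and variance $\sigma^2$. The score of a density $p$ on $\mathbb{R}$ is $\nabla_x\log p(x)$, the derivative with respect to $x$ (not with respect to parameters). *)

theory Defs
  imports "HOL-Probability.Probability"
begin

text \<open>Two-component Gaussian mixture with common standard deviation s (variance s^2):
  w * N(x; m1, s^2) + (1 - w) * N(x; m2, s^2).  normal_density m s x is the Gaussian
  density with mean m and standard deviation s.\<close>
definition gmm2 :: "real \<Rightarrow> real \<Rightarrow> real \<Rightarrow> real \<Rightarrow> real \<Rightarrow> real" where
  "gmm2 w m1 m2 s x = w * normal_density m1 s x + (1 - w) * normal_density m2 s x"

end

theory Submission
  imports Defs "HOL-Real_Asymp.Real_Asymp"
begin

text \<open>The score of the mixture is the score of the second component corrected by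
  \<open>(\<mu>2 - \<mu>1) / \<sigma>\<^sup>2\<close> times the posterior weight of the first component. At
  \<open>x = (\<mu>1 + \<mu>2) / 2 + \<delta>\<close> that posterior is the logistic expression
  \<open>\<pi>1 / (\<pi>1 + \<pi>2 exp (D \<delta>))\<close> in \<open>D = (\<mu>2 - \<mu>1) / \<sigma>\<^sup>2\<close>, so the difference of the two scores
  is \<open>D\<close> times a difference of two such expressions. As \<open>D \<rightarrow> \<infinity>\<close> both converge
  exponentially fast to the same limit (0 if \<open>\<delta> > 0\<close>, 1 if \<open>\<delta> < 0\<close>), which beats the
  linear factor \<open>D\<close>.\<close>

definition gmm2_posterior :: "real \<Rightarrow> real \<Rightarrow> real \<Rightarrow> real \<Rightarrow> real \<Rightarrow> real" where
  "gmm2_posterior w m1 m2 s x = w * normal_density m1 s x / gmm2 w m1 m2 s x"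

lemma has_real_derivative_normal_density:
  assumes "s \<noteq> 0"
  shows "(normal_density m s has_real_derivative - (x - m) / s\<^sup>2 * normal_density m s x) (at x)"
proof -
  obtain c where c: "normal_density m s = (\<lambda>y. c * exp (- (y - m)\<^sup>2 / (2 * s\<^sup>2)))"
    unfolding normal_density_def[abs_def] by blast
  show ?thesis
    unfolding c using assms
    by (auto intro!: derivative_eq_intros simp: field_simps power2_eq_square)
qed

lemma gmm2_pos:
  assumes "0 < w" "w < 1" "0 < s"
  shows "0 < gmm2 w m1 m2 s x"
  unfolding gmm2_def using assms normal_density_pos[of s] by (simp add: add_pos_pos)

lemma deriv_ln_gmm2:
  assumes "0 < w" "w < 1" "0 < s"
  shows "deriv (\<lambda>y. ln (gmm2 w m1 m2 s y)) x =
    - (x - m2) / s\<^sup>2 - (m2 - m1) / s\<^sup>2 * gmm2_posterior w m1 m2 s x"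
proof -
  let ?N1 = "normal_density m1 s x" and ?N2 = "normal_density m2 s x"
  let ?p = "gmm2 w m1 m2 s x"
  have "(gmm2 w m1 m2 s has_real_derivative
      w * (- (x - m1) / s\<^sup>2 * ?N1) + (1 - w) * (- (x - m2) / s\<^sup>2 * ?N2)) (at x)"
    unfolding gmm2_def[abs_def] using assms
    by (intro DERIV_add DERIV_cmult has_real_derivative_normal_density) auto
  then have "((\<lambda>y. ln (gmm2 w m1 m2 s y)) has_real_derivative
      (w * (- (x - m1) / s\<^sup>2 * ?N1) + (1 - w) * (- (x - m2) / s\<^sup>2 * ?N2)) / ?p) (at x)"
    using gmm2_pos[OF assms] by (auto intro!: derivative_eq_intros simp: divide_inverse mult.commute)
  moreover have "(w * (- (x - m1) / s\<^sup>2 * ?N1) + (1 - w) * (- (x - m2) / s\<^sup>2 * ?N2)) / ?p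
      = - (x - m2) / s\<^sup>2 - (m2 - m1) / s\<^sup>2 * gmm2_posterior w m1 m2 s x"
  proof -
    have "w * (- (x - m1) / s\<^sup>2 * ?N1) + (1 - w) * (- (x - m2) / s\<^sup>2 * ?N2)
        = - (x - m2) / s\<^sup>2 * ?p - (m2 - m1) / s\<^sup>2 * (w * ?N1)"
      unfolding gmm2_def by (simp add: diff_divide_distrib algebra_simps)
    then show ?thesis
      using gmm2_pos[OF assms, of m1 m2 x]
      unfolding gmm2_posterior_def by (simp add: diff_divide_distrib)
  qed
  ultimately show ?thesis by (simp add: DERIV_imp_deriv)
qed

lemma normal_density_shifted_midpoint:
  assumes "s \<noteq> 0"
  shows "normal_density m2 s ((m1 + m2) / 2 + d)
    = normal_density m1 s ((m1 + m2) / 2 + d) * exp ((m2 - m1) / s\<^sup>2 * d)"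
proof -
  have "- ((m1 + m2) / 2 + d - m2)\<^sup>2 / (2 * s\<^sup>2)
      = - ((m1 + m2) / 2 + d - m1)\<^sup>2 / (2 * s\<^sup>2) + (m2 - m1) / s\<^sup>2 * d"
    using assms by (simp add: field_simps power2_eq_square)
  then show ?thesis unfolding normal_density_def by (simp only: exp_add mult.assoc)
qed

lemma gmm2_posterior_midpoint:
  assumes "0 < w" "w < 1" "0 < s"
  shows "gmm2_posterior w m1 m2 s ((m1 + m2) / 2 + d) = w / (w + (1 - w) * exp ((m2 - m1) / s\<^sup>2 * d))"
proof -
  let ?N = "normal_density m1 s ((m1 + m2) / 2 + d)" and ?E = "exp ((m2 - m1) / s\<^sup>2 * d)"
  from assms(3) have "s \<noteq> 0" by simp
  have "gmm2 w m1 m2 s ((m1 + m2) / 2 + d) = ?N * (w + (1 - w) * ?E)"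
    unfolding gmm2_def normal_density_shifted_midpoint[OF \<open>s \<noteq> 0\<close>] by (simp add: algebra_simps)
  moreover have "0 < ?N"
    using assms(3) by (rule normal_density_pos)
  ultimately show ?thesis
    unfolding gmm2_posterior_def by simp
qed

lemma gmm2_score_diff_midpoint:
  fixes w w' m1 m2 s d :: real
  assumes "0 < w" "w < 1" "0 < w'" "w' < 1" "0 < s"
  defines "D \<equiv> (m2 - m1) / s\<^sup>2"
  shows "deriv (\<lambda>y. ln (gmm2 w m1 m2 s y)) ((m1 + m2) / 2 + d)
      - deriv (\<lambda>y. ln (gmm2 w' m1 m2 s y)) ((m1 + m2) / 2 + d)
    = D * (w' / (w' + (1 - w') * exp (D * d)) - w / (w + (1 - w) * exp (D * d)))"
  unfolding deriv_ln_gmm2[OF assms(1-2,5)] deriv_ln_gmm2[OF assms(3-5)]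
    gmm2_posterior_midpoint[OF assms(1-2,5)] gmm2_posterior_midpoint[OF assms(3-5)] D_def
  by (simp add: algebra_simps)

lemma tendsto_scaled_logistic_diff:
  fixes w w' d :: real
  assumes "0 < w" "w < 1" "0 < w'" "w' < 1" "d \<noteq> 0"
  shows "((\<lambda>D. D * (w' / (w' + (1 - w') * exp (D * d)) - w / (w + (1 - w) * exp (D * d))))
    \<longlongrightarrow> 0) at_top"
proof (cases "d > 0")
  case True
  with assms show ?thesis by real_asymp
next
  case False
  with assms have "d < 0" by simp
  with assms show ?thesis by real_asymp
qed

theorem lemma2:
  fixes p1 p1' \<delta> :: real
  assumes "0 < p1" "p1 < 1" "0 < p1'" "p1' < 1" "\<delta> \<noteq> 0"
  shows "\<forall>\<epsilon>>0. \<exists>K>0. \<forall>\<mu>1 \<mu>2 \<sigma>::real. \<mu>1 < \<mu>2 \<longrightarrow> \<sigma> > 0 \<longrightarrow> (\<mu>1 - \<mu>2) / \<sigma>\<^sup>2 < - K \<longrightarrow>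
     \<bar>deriv (\<lambda>y. ln (gmm2 p1 \<mu>1 \<mu>2 \<sigma> y)) ((\<mu>1 + \<mu>2) / 2 + \<delta>)
      - deriv (\<lambda>y. ln (gmm2 p1' \<mu>1 \<mu>2 \<sigma> y)) ((\<mu>1 + \<mu>2) / 2 + \<delta>)\<bar> < \<epsilon>"
proof -
  let ?f = "\<lambda>D. D * (p1' / (p1' + (1 - p1') * exp (D * \<delta>)) - p1 / (p1 + (1 - p1) * exp (D * \<delta>)))"
  have "\<exists>K>0. \<forall>D>K. \<bar>?f D\<bar> < \<epsilon>" if "\<epsilon> > 0" for \<epsilon>
  proof -
    from tendsto_scaled_logistic_diff[OF assms] that obtain N where "\<forall>D>N. \<bar>?f D\<bar> < \<epsilon>"
      unfolding tendsto_iff eventually_at_top_dense dist_real_def by fastforce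
    then show ?thesis by (intro exI[of _ "max N 1"]) auto
  qed
  moreover have "deriv (\<lambda>y. ln (gmm2 p1 \<mu>1 \<mu>2 \<sigma> y)) ((\<mu>1 + \<mu>2) / 2 + \<delta>)
      - deriv (\<lambda>y. ln (gmm2 p1' \<mu>1 \<mu>2 \<sigma> y)) ((\<mu>1 + \<mu>2) / 2 + \<delta>) = ?f ((\<mu>2 - \<mu>1) / \<sigma>\<^sup>2)"
    if "\<sigma> > 0" for \<mu>1 \<mu>2 \<sigma> :: real
    using gmm2_score_diff_midpoint[OF assms(1-4) that] by simp
  moreover have "(\<mu>1 - \<mu>2) / \<sigma>\<^sup>2 = - ((\<mu>2 - \<mu>1) / \<sigma>\<^sup>2)" for \<mu>1 \<mu>2 \<sigma> :: real
    by (simp add: minus_divide_left)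
  ultimately show ?thesis by (metis neg_less_iff_less)
qed

end
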